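(* Let $p$ be a two-phase solution and let $(x,t)$ be a point where $\nu_1(x,t)>0$. Then $\partial_x\nu_1=\partial_t\nu_1=0$ at $(x,t)$ if and only if either (i) $\mu_1,\mu_2\in\mathbb R$, or (ii) $\mu_2^*=\mu_1$.
   Context: Let $p(x,t)$, $(x,t)\in\mathbb R^2$, be a smooth complex-valued solution of the focusing nonlinear Schrödinger equation $ip_t+p_{xx}+2|p|^2p=0$; $^*$ denotes complex conjugation and subscripts denote partial derivatives. Put $\mathbb U=\begin{pmatrix}-i\lambda& ip\\ ip^*& i\lambda\end{pmatrix}$ and $\mathbb V=\begin{pmatrix}-2i\lambda^2+i|p|^2& 2i\lambda p-p_x\\ 2i\lambda p^*+p^*_x& 2i\lambda^2-i|p|^2\end{pmatrix}$. The solution $p$ is called a two-phase solution if there exist real constants $c_0,c_1,c_2$ such that the matrix $\Psi=\begin{pmatrix}\Psi_{11}&\Psi_{12}\\ \Psi_{21}&-\Psi_{11}\end{pmatrix}$ with $\Psi_{11}=-i\lambda^3-ic_2\lambda^2+(\tfrac12 i|p|^2-ic_1)\lambda+\tfrac14(pp^*_x-p_xp^* )+\tfrac12 ic_2|p|^2-ic_0$, $\Psi_{12}=ip\lambda^2+(-\tfrac12p_x+ic_2p)\lambda-\tfrac14 ip_{xx}-\tfrac12 ip|p|^2-\tfrac12c_2p_x+ic_1p$, $\Psi_{21}=ip^*\lambda^2+(\tfrac12p^*_x+ic_2p^* )\lambda-\tfrac14 ip^*_{xx}-\tfrac12 ip^*|p|^2+\tfrac12c_2p^*_x+ic_1p^*$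 satisfies $\Psi_x=[\mathbb U,\Psi]$ and $\Psi_t=[\mathbb V,\Psi]$ identically in $\lambda\in\mathbb C$. Set $\nu_1=|p|^2$. At points where $p\neq0$ the Dirichlet eigenvalues $\mu_1,\mu_2\in\mathbb C$ are defined (up to order) by $\Psi_{12}(\lambda)=ip(\lambda-\mu_1)(\lambda-\mu_2)$. *)

theory Defs
  imports "HOL-Analysis.Analysis"
begin

definition dx :: "(real \<Rightarrow> real \<Rightarrow> 'a::real_normed_vector) \<Rightarrow> real \<Rightarrow> real \<Rightarrow> 'a" where
  "dx f x t = vector_derivative (\<lambda>s. f s t) (at x)"

definition dt :: "(real \<Rightarrow> real \<Rightarrow> 'a::real_normed_vector) \<Rightarrow> real \<Rightarrow> real \<Rightarrow> 'a" where
  "dt f x t = vector_derivative (\<lambda>s. f x s) (at t)"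

definition iter_partial :: "bool list \<Rightarrow> (real \<Rightarrow> real \<Rightarrow> complex) \<Rightarrow> real \<Rightarrow> real \<Rightarrow> complex" where
  "iter_partial ds f = foldr (\<lambda>b h. if b then dx h else dt h) ds f"

definition smooth2 :: "(real \<Rightarrow> real \<Rightarrow> complex) \<Rightarrow> bool" where
  "smooth2 f \<longleftrightarrow> (\<forall>ds. continuous_on UNIV (\<lambda>z. iter_partial ds f (fst z) (snd z)) \<and>
      (\<forall>x t. (\<lambda>s. iter_partial ds f s t) differentiable (at x) \<and>
             (\<lambda>s. iter_partial ds f x s) differentiable (at t)))"

definition focusing_NLS :: "(real \<Rightarrow> real \<Rightarrow> complex) \<Rightarrow> bool" where
  "focusing_NLS p \<longleftrightarrow> (\<forall>x t. \<i> * dt p x t + dx (dx p) x t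
      + 2 * complex_of_real ((cmod (p x t))\<^sup>2) * p x t = 0)"

text \<open>2x2 complex matrix [[a,b],[c,d]].\<close>
definition mk2 :: "complex \<Rightarrow> complex \<Rightarrow> complex \<Rightarrow> complex \<Rightarrow> complex^2^2" where
  "mk2 a b c d = (\<chi> i j. if i = 1 then (if j = 1 then a else b) else (if j = 1 then c else d))"

definition commut :: "complex^2^2 \<Rightarrow> complex^2^2 \<Rightarrow> complex^2^2" where
  "commut A B = A ** B - B ** A"

definition LaxU :: "(real \<Rightarrow> real \<Rightarrow> complex) \<Rightarrow> complex \<Rightarrow> real \<Rightarrow> real \<Rightarrow> complex^2^2" where
  "LaxU p lam x t = mk2 (-\<i>*lam) (\<i> * p x t) (\<i> * cnj (p x t)) (\<i>*lam)"

definition LaxV :: "(real \<Rightarrow> real \<Rightarrow> complex) \<Rightarrow> complex \<Rightarrow> real \<Rightarrow> real \<Rightarrow> complex^2^2" where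
  "LaxV p lam x t = (let q = p x t; qx = dx p x t; n = complex_of_real ((cmod q)\<^sup>2) in
     mk2 (-2*\<i>*lam^2 + \<i>*n) (2*\<i>*lam*q - qx)
         (2*\<i>*lam*cnj q + cnj qx) (2*\<i>*lam^2 - \<i>*n))"

definition Psi11 :: "(real \<Rightarrow> real \<Rightarrow> complex) \<Rightarrow> real \<Rightarrow> real \<Rightarrow> real \<Rightarrow> complex \<Rightarrow> real \<Rightarrow> real \<Rightarrow> complex" where
  "Psi11 p c0 c1 c2 lam x t = (let q = p x t; qx = dx p x t; n = complex_of_real ((cmod q)\<^sup>2) in
     -\<i>*lam^3 - \<i>* of_real c2*lam^2 + (\<i>*n/2 - \<i>* of_real c1)*lam
     + (q * cnj qx - qx * cnj q)/4 + \<i>* of_real c2*n/2 - \<i>* of_real c0)"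

definition Psi12 :: "(real \<Rightarrow> real \<Rightarrow> complex) \<Rightarrow> real \<Rightarrow> real \<Rightarrow> real \<Rightarrow> complex \<Rightarrow> real \<Rightarrow> real \<Rightarrow> complex" where
  "Psi12 p c0 c1 c2 lam x t = (let q = p x t; qx = dx p x t; qxx = dx (dx p) x t;
       n = complex_of_real ((cmod q)\<^sup>2) in
     \<i>*q*lam^2 + (-qx/2 + \<i>* of_real c2*q)*lam - \<i>*qxx/4 - \<i>*q*n/2
     - of_real c2*qx/2 + \<i>* of_real c1*q)"

definition Psi21 :: "(real \<Rightarrow> real \<Rightarrow> complex) \<Rightarrow> real \<Rightarrow> real \<Rightarrow> real \<Rightarrow> complex \<Rightarrow> real \<Rightarrow> real \<Rightarrow> complex" where
  "Psi21 p c0 c1 c2 lam x t = (let q = cnj (p x t); qx = cnj (dx p x t); qxx = cnj (dx (dx p) x t);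
       n = complex_of_real ((cmod q)\<^sup>2) in
     \<i>*q*lam^2 + (qx/2 + \<i>* of_real c2*q)*lam - \<i>*qxx/4 - \<i>*q*n/2
     + of_real c2*qx/2 + \<i>* of_real c1*q)"

definition Psi :: "(real \<Rightarrow> real \<Rightarrow> complex) \<Rightarrow> real \<Rightarrow> real \<Rightarrow> real \<Rightarrow> complex \<Rightarrow> real \<Rightarrow> real \<Rightarrow> complex^2^2" where
  "Psi p c0 c1 c2 lam x t = mk2 (Psi11 p c0 c1 c2 lam x t) (Psi12 p c0 c1 c2 lam x t)
      (Psi21 p c0 c1 c2 lam x t) (- Psi11 p c0 c1 c2 lam x t)"

definition two_phase :: "(real \<Rightarrow> real \<Rightarrow> complex) \<Rightarrow> bool" where
  "two_phase p \<longleftrightarrow> (\<exists>c0 c1 c2 :: real. \<forall>lam x t.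
      dx (Psi p c0 c1 c2 lam) x t = commut (LaxU p lam x t) (Psi p c0 c1 c2 lam x t) \<and>
      dt (Psi p c0 c1 c2 lam) x t = commut (LaxV p lam x t) (Psi p c0 c1 c2 lam x t))"

end

theory Submission
  imports Defs
begin

text \<open>Comparing coefficients in the factorization of \<open>\<Psi>\<^sub>1\<^sub>2\<close> expresses \<open>p\<^sub>x\<close> and \<open>p\<^sub>x\<^sub>x\<close> through
  \<open>p\<close> and the symmetric functions of the Dirichlet eigenvalues; together with the NLS for
  \<open>p\<^sub>t\<close> this gives the trace formulas
  \<open>\<partial>\<^sub>x\<nu>\<^sub>1 = -4\<nu>\<^sub>1 Im(\<mu>\<^sub>1+\<mu>\<^sub>2)\<close> and \<open>\<partial>\<^sub>t\<nu>\<^sub>1 = 8\<nu>\<^sub>1 (Im(\<mu>\<^sub>1\<mu>\<^sub>2) + c\<^sub>2 Im(\<mu>\<^sub>1+\<mu>\<^sub>2))\<close>.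
  Since \<open>\<nu>\<^sub>1 > 0\<close>, both derivatives vanish iff \<open>\<mu>\<^sub>1+\<mu>\<^sub>2\<close> and \<open>\<mu>\<^sub>1\<mu>\<^sub>2\<close> are real, i.e. iff
  \<open>\<mu>\<^sub>1, \<mu>\<^sub>2\<close> are the roots of a real quadratic.\<close>

lemma deriv_cmod_square:
  fixes f :: "real \<Rightarrow> complex"
  assumes "f differentiable (at x)"
  shows "deriv (\<lambda>s. (cmod (f s))\<^sup>2) x = 2 * Re (vector_derivative f (at x) * cnj (f x))"
proof -
  define a where "a = vector_derivative f (at x)"
  have fa: "(f has_vector_derivative a) (at x)"
    using assms a_def vector_derivative_works by blast
  have "((\<lambda>s. f s * cnj (f s)) has_vector_derivative (f x * cnj a + a * cnj (f x))) (at x)"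
    using has_vector_derivative_mult[OF fa has_vector_derivative_cnj[OF fa]] by simp
  then have "((\<lambda>s. Re (f s * cnj (f s))) has_vector_derivative Re (f x * cnj a + a * cnj (f x))) (at x)"
    using bounded_linear.has_vector_derivative[OF bounded_linear_Re] by blast
  moreover have "\<And>z. Re (z * cnj z) = (cmod z)\<^sup>2"
    by (subst complex_norm_square[symmetric]) (simp flip: of_real_power)
  moreover have "Re (f x * cnj a + a * cnj (f x)) = 2 * Re (a * cnj (f x))"
    by (simp add: algebra_simps)
  ultimately have "((\<lambda>s. (cmod (f s))\<^sup>2) has_real_derivative 2 * Re (a * cnj (f x))) (at x)"
    by (simp add: has_real_derivative_iff_has_vector_derivative)
  then show ?thesis unfolding a_def by (rule DERIV_imp_deriv)
qed

lemma coeffs_eq_if_factorization: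
  fixes a b c m1 m2 :: "'a::comm_ring_1"
  assumes "\<forall>lam. a * lam^2 + b * lam + c = a * (lam - m1) * (lam - m2)"
  shows "b = - a * (m1 + m2)" and "c = a * m1 * m2"
proof -
  show c: "c = a * m1 * m2" using spec[OF assms, of 0] by simp
  have "a + b + c = a * (1 - m1) * (1 - m2)" using spec[OF assms, of 1] by simp
  then have "b + a * (m1 + m2) = 0" unfolding c by (simp add: algebra_simps)
  then show "b = - a * (m1 + m2)" by (simp add: eq_neg_iff_add_eq_0 algebra_simps)
qed

lemma Im_add_mult_eq_0_iff:
  fixes m1 m2 :: complex
  shows "(Im (m1 + m2) = 0 \<and> Im (m1 * m2) = 0) \<longleftrightarrow> ((m1 \<in> \<real> \<and> m2 \<in> \<real>) \<or> cnj m2 = m1)"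
proof
  assume "Im (m1 + m2) = 0 \<and> Im (m1 * m2) = 0"
  then have im: "Im m2 = - Im m1" and "Re m1 * Im m2 + Im m1 * Re m2 = 0" by auto
  then have "Im m1 * (Re m2 - Re m1) = 0" by (simp add: algebra_simps)
  then have "Im m1 = 0 \<or> Re m2 = Re m1" by auto
  then show "(m1 \<in> \<real> \<and> m2 \<in> \<real>) \<or> cnj m2 = m1"
    using im by (auto simp: complex_is_Real_iff complex_eq_iff)
next
  assume "(m1 \<in> \<real> \<and> m2 \<in> \<real>) \<or> cnj m2 = m1"
  then show "Im (m1 + m2) = 0 \<and> Im (m1 * m2) = 0"
    by (auto simp: complex_is_Real_iff)
qed

lemma smooth2_differentiable:
  assumes "smooth2 f"
  shows "(\<lambda>s. f s t) differentiable (at x)" and "(\<lambda>s. f x s) differentiable (at t)"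
proof -
  have "(\<lambda>s. iter_partial [] f s t) differentiable (at x) \<and>
        (\<lambda>s. iter_partial [] f x s) differentiable (at t)"
    using assms unfolding smooth2_def by blast
  then show "(\<lambda>s. f s t) differentiable (at x)" and "(\<lambda>s. f x s) differentiable (at t)"
    by (simp_all add: iter_partial_def)
qed

lemma focusing_NLS_dt:
  assumes "focusing_NLS p"
  shows "dt p x t = \<i> * (dx (dx p) x t + 2 * of_real ((cmod (p x t))\<^sup>2) * p x t)"
proof -
  let ?r = "dx (dx p) x t + 2 * of_real ((cmod (p x t))\<^sup>2) * p x t"
  have r: "\<i> * dt p x t = - ?r"
    using assms unfolding focusing_NLS_def
    by (subst eq_neg_iff_add_eq_0) (simp add: add.assoc)
  have "dt p x t = - \<i> * (\<i> * dt p x t)" by simp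
  also have "\<dots> = \<i> * ?r" unfolding r by (simp add: algebra_simps)
  finally show ?thesis .
qed

lemma dx_eq_Dirichlet:
  assumes "\<forall>lam. Psi12 p c0 c1 c2 lam x t = \<i> * p x t * (lam - mu1) * (lam - mu2)"
  defines "q \<equiv> p x t" and "n \<equiv> complex_of_real ((cmod (p x t))\<^sup>2)"
  shows "dx p x t = 2 * \<i> * q * (mu1 + mu2 + of_real c2)"
    and "dx (dx p) x t = - 4 * q * mu1 * mu2 - 2 * q * n + 2 * \<i> * of_real c2 * dx p x t
                         + 4 * of_real c1 * q"
proof -
  let ?b = "- dx p x t / 2 + \<i> * of_real c2 * q"
  let ?c = "- \<i> * dx (dx p) x t / 4 - \<i> * q * n / 2 - of_real c2 * dx p x t / 2 + \<i> * of_real c1 * q"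
  have "\<forall>lam. \<i> * q * lam^2 + ?b * lam + ?c = \<i> * q * (lam - mu1) * (lam - mu2)"
    using assms(1) unfolding Psi12_def Let_def q_def n_def by (simp add: algebra_simps)
  note coeffs = coeffs_eq_if_factorization[OF this]
  from coeffs(1) show "dx p x t = 2 * \<i> * q * (mu1 + mu2 + of_real c2)"
    by (simp add: field_simps)
  from coeffs(2) have "- \<i> * dx (dx p) x t / 4
      = \<i> * q * mu1 * mu2 + \<i> * q * n / 2 + of_real c2 * dx p x t / 2 - \<i> * of_real c1 * q"
    by (simp add: algebra_simps add_eq_0_iff eq_diff_eq diff_eq_eq)
  then have "4 * \<i> * (- \<i> * dx (dx p) x t / 4)
      = 4 * \<i> * (\<i> * q * mu1 * mu2 + \<i> * q * n / 2 + of_real c2 * dx p x t / 2 - \<i> * of_real c1 * q)"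
    by simp
  then show "dx (dx p) x t = - 4 * q * mu1 * mu2 - 2 * q * n + 2 * \<i> * of_real c2 * dx p x t
                         + 4 * of_real c1 * q"
    by (simp add: algebra_simps)
qed

lemma trace_formulas:
  assumes "smooth2 p" and "focusing_NLS p"
    and "\<forall>lam. Psi12 p c0 c1 c2 lam x t = \<i> * p x t * (lam - mu1) * (lam - mu2)"
  defines "\<nu> \<equiv> (cmod (p x t))\<^sup>2"
  shows "deriv (\<lambda>s. (cmod (p s t))\<^sup>2) x = - 4 * \<nu> * Im (mu1 + mu2)"
    and "deriv (\<lambda>s. (cmod (p x s))\<^sup>2) t = 8 * \<nu> * (Im (mu1 * mu2) + c2 * Im (mu1 + mu2))"
proof -
  let ?q = "p x t"
  have qq: "?q * cnj ?q = of_real \<nu>"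
    unfolding \<nu>_def by (simp add: complex_norm_square[symmetric])
  note px = dx_eq_Dirichlet(1)[OF assms(3)]
    and pxx = dx_eq_Dirichlet(2)[OF assms(3), folded \<nu>_def]
  define wx where "wx = dx p x t * cnj ?q"
  define wxx where "wxx = dx (dx p) x t * cnj ?q"
  have "wx = 2 * \<i> * (?q * cnj ?q) * (mu1 + mu2 + of_real c2)"
    unfolding wx_def px by (simp only: ac_simps)
  then have Re_wx: "Re wx = - 2 * \<nu> * Im (mu1 + mu2)"
    unfolding qq by simp
  have wxx_eq: "wxx = - 4 * (?q * cnj ?q) * mu1 * mu2 - 2 * (?q * cnj ?q) * of_real \<nu>
          + 2 * \<i> * of_real c2 * wx + 4 * of_real c1 * (?q * cnj ?q)"
    unfolding wxx_def wx_def pxx by (simp add: algebra_simps)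
  have "Im wxx = - 4 * \<nu> * Im (mu1 * mu2) + 2 * c2 * Re wx"
    unfolding wxx_eq qq by (simp add: algebra_simps)
  then have Im_wxx: "Im wxx = - 4 * \<nu> * (Im (mu1 * mu2) + c2 * Im (mu1 + mu2))"
    unfolding Re_wx by (simp add: algebra_simps)
  have "dt p x t * cnj ?q = \<i> * wxx + 2 * \<i> * of_real \<nu> * (?q * cnj ?q)"
    unfolding wxx_def focusing_NLS_dt[OF assms(2)] by (simp add: algebra_simps \<nu>_def)
  then have "Re (dt p x t * cnj ?q) = - Im wxx"
    unfolding qq by simp
  then show "deriv (\<lambda>s. (cmod (p x s))\<^sup>2) t = 8 * \<nu> * (Im (mu1 * mu2) + c2 * Im (mu1 + mu2))"
    using deriv_cmod_square[OF smooth2_differentiable(2)[OF assms(1)]] Im_wxx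
    unfolding dt_def by simp
  show "deriv (\<lambda>s. (cmod (p s t))\<^sup>2) x = - 4 * \<nu> * Im (mu1 + mu2)"
    using deriv_cmod_square[OF smooth2_differentiable(1)[OF assms(1)]] Re_wx
    unfolding wx_def dx_def by simp
qed

theorem mainTheorem5:
  fixes p :: "real \<Rightarrow> real \<Rightarrow> complex" and c0 c1 c2 x t :: real and mu1 mu2 :: complex
  assumes "smooth2 p" and "focusing_NLS p"
    and "\<forall>lam x t.
      dx (Psi p c0 c1 c2 lam) x t = commut (LaxU p lam x t) (Psi p c0 c1 c2 lam x t) \<and>
      dt (Psi p c0 c1 c2 lam) x t = commut (LaxV p lam x t) (Psi p c0 c1 c2 lam x t)"
    and "(cmod (p x t))\<^sup>2 > 0"
    and "\<forall>lam. Psi12 p c0 c1 c2 lam x t = \<i> * p x t * (lam - mu1) * (lam - mu2)"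
  shows "(deriv (\<lambda>s. (cmod (p s t))\<^sup>2) x = 0 \<and> deriv (\<lambda>s. (cmod (p x s))\<^sup>2) t = 0)
     \<longleftrightarrow> ((mu1 \<in> \<real> \<and> mu2 \<in> \<real>) \<or> cnj mu2 = mu1)"
proof -
  note traces = trace_formulas[OF assms(1,2,5)]
  have "(deriv (\<lambda>s. (cmod (p s t))\<^sup>2) x = 0 \<and> deriv (\<lambda>s. (cmod (p x s))\<^sup>2) t = 0)
      \<longleftrightarrow> (Im (mu1 + mu2) = 0 \<and> Im (mu1 * mu2) = 0)"
    unfolding traces using assms(4) by auto
  then show ?thesis by (simp only: Im_add_mult_eq_0_iff)
qed

end
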